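(* Let $\mathbf{a},\mathbf{b},\mathbf{c},\mathbf{d}\in\mathcal{R}^n$ and $\mathbf{e},\mathbf{f},\mathbf{g},\mathbf{h}\in\mathcal{R}^m$. Define the $m\times n$ matrices \begin{align*} Q&=\mathbf{f}^{*t}\mathbf{a}+\mathbf{g}^t\mathbf{c}-\mathbf{e}^t\mathbf{b}^*+\mathbf{h}^t\mathbf{d},\\ R&=\mathbf{f}^{*t}\mathbf{b}+\mathbf{g}^{*t}\mathbf{d}+\mathbf{e}^t\mathbf{a}^*-\mathbf{h}^{*t}\mathbf{c},\\ S&=\mathbf{g}^{*t}\mathbf{a}-\mathbf{f}^t\mathbf{c}-\mathbf{h}^t\mathbf{b}-\mathbf{e}^t\mathbf{d}^*,\\ T&=\mathbf{g}^{t}\mathbf{b}-\mathbf{f}^t\mathbf{d}+\mathbf{h}^{*t}\mathbf{a}+\mathbf{e}^t\mathbf{c}^*. \end{align*} Then in $\mathcal{R}[x^{\pm1},y^{\pm1}]$, \[ (\psi_Q\psi_Q^*+\psi_R\psi_R^*+\psi_S\psi_S^*+\psi_T\psi_T^* )(x,y)=(\psi_{\mathbf{a}}\psi^*_{\mathbf{a}}+\psi_{\mathbf{b}}\psi^*_{\mathbf{b}}+\psi_{\mathbf{c}}\psi^*_{\mathbf{c}}+\psi_{\mathbf{d}}\psi^*_{\mathbf{d}})(x)\,(\psi_{\mathbf{e}}\psi^*_{\mathbf{e}}+\psi_{\mathbf{f}}\psi^*_{\mathbf{f}}+\psi_{\mathbf{g}}\psi^*_{\mathbf{g}}+\psi_{\mathbf{h}}\psi^*_{\mathbf{h}})(y).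 \]
   Context: $\mathcal{R}$ is a commutative ring with identity equipped with an involutive ring automorphism $*$. It is extended to $\mathcal{R}[x^{\pm1}]$ by acting on coefficients and $x\mapsto x^{-1}$, and to $\mathcal{R}[x^{\pm1},y^{\pm1}]$ by acting on coefficients, $x\mapsto x^{-1}$, $y\mapsto y^{-1}$; $f^*$ denotes the image of $f$. For $\mathbf{a}=(a_0,\dots,a_{l-1})\in\mathcal{R}^l$: $\mathbf{a}^*=(a_{l-1}^*,\dots,a_0^* )$, $\phi_{\mathbf{a}}(x)=\sum_{i=0}^{l-1}a_ix^i$, and $\psi_{\mathbf{a}}(x)=x^{1-l}\phi_{\mathbf{a}}(x^2)$. Vectors in $\mathcal{R}^k$ are $1\times k$ matrices, $t$ is transpose, so $\mathbf{u}^t\mathbf{v}$ is the $m\times n$ outer product. For $A\in\mathcal{R}^{m\times n}$ with rows $\mathbf{a}_0,\dots,\mathbf{a}_{m-1}$, $\psi_A(x,y)=\sum_{i=0}^{m-1}\psi_{\mathbf{a}_i}(x)\,y^{2i+1-m}$. *)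

theory Defs
  imports Main "HOL-Library.Poly_Mapping" "HOL-Library.Product_Plus"
begin

text \<open>Laurent polynomials in two variables x, y over a ring 'a, as finitely supported
  coefficient maps on exponent pairs (i,j) :: int \<times> int; multiplication is convolution.
  Laurent polynomials in x alone are those supported on exponents (i,0).\<close>
type_synonym 'a lpoly2 = "(int \<times> int) \<Rightarrow>\<^sub>0 'a"

definition inv_ring_aut :: "('a::comm_ring_1 \<Rightarrow> 'a) \<Rightarrow> bool" where
  "inv_ring_aut s \<longleftrightarrow> (\<forall>u v. s (u + v) = s u + s v) \<and> (\<forall>u v. s (u * v) = s u * s v)
     \<and> s 1 = 1 \<and> (\<forall>u. s (s u) = u)"

text \<open>Extension of the involution: act on coefficients and x \<mapsto> x^-1, y \<mapsto> y^-1.\<close>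
definition lstar :: "('a::comm_ring_1 \<Rightarrow> 'a) \<Rightarrow> 'a lpoly2 \<Rightarrow> 'a lpoly2" where
  "lstar s f = (\<Sum>k\<in>Poly_Mapping.keys f. Poly_Mapping.single (- k) (s (Poly_Mapping.lookup f k)))"

definition vstar :: "('a \<Rightarrow> 'a) \<Rightarrow> nat \<Rightarrow> (nat \<Rightarrow> 'a) \<Rightarrow> (nat \<Rightarrow> 'a)" where
  "vstar s l a = (\<lambda>i. s (a (l - 1 - i)))"

text \<open>psi_a(x) = x^(1-l) phi_a(x^2) = sum_{i<l} a_i x^(2i+1-l), as an element in the x-variable.\<close>
definition psi_x :: "nat \<Rightarrow> (nat \<Rightarrow> 'a::comm_ring_1) \<Rightarrow> 'a lpoly2" where
  "psi_x l a = (\<Sum>i<l. Poly_Mapping.single (2 * int i + 1 - int l, 0) (a i))"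

definition psi_y :: "nat \<Rightarrow> (nat \<Rightarrow> 'a::comm_ring_1) \<Rightarrow> 'a lpoly2" where
  "psi_y l a = (\<Sum>i<l. Poly_Mapping.single (0, 2 * int i + 1 - int l) (a i))"

definition psi_mat :: "nat \<Rightarrow> nat \<Rightarrow> (nat \<Rightarrow> nat \<Rightarrow> 'a::comm_ring_1) \<Rightarrow> 'a lpoly2" where
  "psi_mat m n A = (\<Sum>i<m. psi_x n (A i) * Poly_Mapping.single (0, 2 * int i + 1 - int m) 1)"

definition outer :: "(nat \<Rightarrow> 'a::times) \<Rightarrow> (nat \<Rightarrow> 'a) \<Rightarrow> nat \<Rightarrow> nat \<Rightarrow> 'a" where
  "outer u v = (\<lambda>i j. u i * v j)"

end

theory Submission
  imports Defs HOL.Modules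
begin

text \<open>The map \<open>\<psi>\<close> is additive, sends an outer product \<open>u\<^sup>t v\<close> to \<open>\<psi>\<^sub>v(x) \<psi>\<^sub>u(y)\<close>
  and a conjugate-reversed vector \<open>v\<^sup>*\<close> to \<open>\<psi>\<^sub>v\<^sup>*\<close>, while \<open>*\<close> is an involutive ring
  automorphism of the Laurent polynomial ring. Hence both sides of the claim become the
  same polynomial expression in \<open>\<psi>\<^sub>a(x), \<dots>, \<psi>\<^sub>d(x), \<psi>\<^sub>e(y), \<dots>, \<psi>\<^sub>h(y)\<close> and their
  conjugates, and the claim reduces to a four-square type identity which holds in every
  commutative ring when the conjugates are treated as independent variables.\<close>

lemma inv_ring_aut_additive: "inv_ring_aut s \<Longrightarrow> additive s"
  unfolding inv_ring_aut_def additive_def by blast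

lemma inv_ring_aut_mult: "inv_ring_aut s \<Longrightarrow> s (u * v) = s u * s v"
  unfolding inv_ring_aut_def by blast

lemma inv_ring_aut_involutive: "inv_ring_aut s \<Longrightarrow> s (s u) = u"
  unfolding inv_ring_aut_def by blast

lemma lookup_lstar:
  assumes "inv_ring_aut s"
  shows "Poly_Mapping.lookup (lstar s f) k = s (Poly_Mapping.lookup f (- k))"
proof -
  have "Poly_Mapping.lookup (lstar s f) k
      = (\<Sum>l\<in>Poly_Mapping.keys f. if l = - k then s (Poly_Mapping.lookup f l) else 0)"
    unfolding lstar_def lookup_sum by (intro sum.cong) (auto simp: lookup_single when_def)
  also have "\<dots> = s (Poly_Mapping.lookup f (- k))"
    using additive.zero[OF inv_ring_aut_additive[OF assms]] by (simp add: sum.delta in_keys_iff)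
  finally show ?thesis .
qed

lemma additive_lstar: "inv_ring_aut s \<Longrightarrow> additive (lstar s)"
  unfolding additive_def
  by (auto intro!: poly_mapping_eqI simp: lookup_lstar lookup_add
      additive.add[OF inv_ring_aut_additive])

lemma lstar_involutive: "inv_ring_aut s \<Longrightarrow> lstar s (lstar s p) = p"
  by (rule poly_mapping_eqI) (simp add: lookup_lstar inv_ring_aut_involutive)

lemma lstar_single:
  assumes "inv_ring_aut s"
  shows "lstar s (Poly_Mapping.single k v) = Poly_Mapping.single (- k) (s v)"
proof (rule poly_mapping_eqI)
  fix x
  have "k = - x \<longleftrightarrow> - k = x" by auto
  then show "Poly_Mapping.lookup (lstar s (Poly_Mapping.single k v)) x
      = Poly_Mapping.lookup (Poly_Mapping.single (- k) (s v)) x"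
    by (simp add: lookup_lstar[OF assms] lookup_single when_def
        additive.zero[OF inv_ring_aut_additive[OF assms]])
qed

lemma poly_mapping_sum_single_lookup:
  "(p :: 'k \<Rightarrow>\<^sub>0 'b::comm_monoid_add)
     = (\<Sum>k\<in>Poly_Mapping.keys p. Poly_Mapping.single k (Poly_Mapping.lookup p k))"
  by (rule poly_mapping_eqI) (simp add: lookup_sum lookup_single when_def sum.delta' in_keys_iff)

lemma lstar_mult:
  assumes "inv_ring_aut s"
  shows "lstar s (p * q) = lstar s p * lstar s q"
proof -
  let ?p = "\<lambda>k. Poly_Mapping.single k (Poly_Mapping.lookup p k)"
    and ?q = "\<lambda>l. Poly_Mapping.single l (Poly_Mapping.lookup q l)"
  note lstar_sum = additive.sum[OF additive_lstar[OF assms]]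
  have "lstar s (p * q) = lstar s ((\<Sum>k\<in>Poly_Mapping.keys p. ?p k) * (\<Sum>l\<in>Poly_Mapping.keys q. ?q l))"
    by (metis poly_mapping_sum_single_lookup)
  also have "\<dots> = (\<Sum>k\<in>Poly_Mapping.keys p. \<Sum>l\<in>Poly_Mapping.keys q. lstar s (?p k * ?q l))"
    by (simp add: sum_product lstar_sum)
  also have "\<dots> = (\<Sum>k\<in>Poly_Mapping.keys p. \<Sum>l\<in>Poly_Mapping.keys q. lstar s (?p k) * lstar s (?q l))"
    by (simp add: mult_single lstar_single[OF assms] inv_ring_aut_mult[OF assms])
  also have "\<dots> = lstar s p * lstar s q"
    by (simp add: sum_product[symmetric] lstar_sum[symmetric]
        flip: poly_mapping_sum_single_lookup)
  finally show ?thesis .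
qed

lemma lstar_centered_sum:
  assumes "inv_ring_aut s" and emb_uminus: "\<And>k. emb (- k) = - emb k"
  shows "lstar s (\<Sum>i<l. Poly_Mapping.single (emb (2 * int i + 1 - int l)) (v i))
       = (\<Sum>i<l. Poly_Mapping.single (emb (2 * int i + 1 - int l)) (vstar s l v i))"
proof -
  have "lstar s (\<Sum>i<l. Poly_Mapping.single (emb (2 * int i + 1 - int l)) (v i))
      = (\<Sum>i<l. Poly_Mapping.single (emb (- (2 * int i + 1 - int l))) (s (v i)))"
    by (simp add: additive.sum[OF additive_lstar[OF assms(1)]] lstar_single[OF assms(1)] flip: emb_uminus)
  \<comment> \<open>reversing the index, \<open>i \<mapsto> l - 1 - i\<close>, negates the centred exponent \<open>2i + 1 - l\<close>\<close>
  also have "\<dots> = (\<Sum>i<l. Poly_Mapping.single (emb (- (2 * int (l - Suc i) + 1 - int l))) (s (v (l - Suc i))))"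
    by (rule sum.nat_diff_reindex[symmetric])
  also have "\<dots> = (\<Sum>i<l. Poly_Mapping.single (emb (2 * int i + 1 - int l)) (vstar s l v i))"
    unfolding vstar_def by (intro sum.cong refl) (auto simp: of_nat_diff algebra_simps)
  finally show ?thesis .
qed

lemma psi_x_vstar: "inv_ring_aut s \<Longrightarrow> psi_x n (vstar s n v) = lstar s (psi_x n v)"
  unfolding psi_x_def using lstar_centered_sum[of s "\<lambda>k. (k, 0)"] by simp

lemma psi_y_vstar: "inv_ring_aut s \<Longrightarrow> psi_y n (vstar s n v) = lstar s (psi_y n v)"
  unfolding psi_y_def using lstar_centered_sum[of s "\<lambda>k. (0, k)"] by simp

lemma psi_x_add: "psi_x n (\<lambda>j. u j + v j) = psi_x n u + psi_x n v"
  unfolding psi_x_def by (simp add: single_add sum.distrib)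

lemma psi_x_diff: "psi_x n (\<lambda>j. u j - v j) = psi_x n u - psi_x n v"
  unfolding psi_x_def by (simp add: single_diff sum_subtractf)

lemma psi_mat_add: "psi_mat m n (\<lambda>i j. A i j + B i j) = psi_mat m n A + psi_mat m n B"
  unfolding psi_mat_def by (simp add: psi_x_add sum.distrib distrib_right)

lemma psi_mat_diff: "psi_mat m n (\<lambda>i j. A i j - B i j) = psi_mat m n A - psi_mat m n B"
  unfolding psi_mat_def by (simp add: psi_x_diff sum_subtractf left_diff_distrib)

lemma psi_x_scale: "psi_x n (\<lambda>j. c * v j) = Poly_Mapping.single 0 c * psi_x n v"
  unfolding psi_x_def by (simp add: sum_distrib_left mult_single)

lemma psi_mat_outer: "psi_mat m n (outer u v) = psi_x n v * psi_y m u"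
  unfolding psi_mat_def psi_y_def outer_def psi_x_scale sum_distrib_left
  by (intro sum.cong refl) (simp add: mult_single ac_simps)

lemma four_square_conj_identity:
  fixes A B C D E F G H A' B' C' D' E' F' G' H' :: "'b::comm_ring_1"
  shows "(A * F' + C * G - B' * E + D * H) * (A' * F + C' * G' - B * E' + D' * H')
   + (B * F' + D * G' + A' * E - C * H') * (B' * F + D' * G + A * E' - C' * H)
   + (A * G' - C * F - B * H - D' * E) * (A' * G - C' * F' - B' * H' - D * E')
   + (B * G - D * F + A * H' + C' * E) * (B' * G' - D' * F' + A' * H + C * E')
   = (A * A' + B * B' + C * C' + D * D') * (E * E' + F * F' + G * G' + H * H')"
  by (simp add: ring_distribs)

theorem lemma3p1:
  fixes s :: "'a::comm_ring_1 \<Rightarrow> 'a"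
    and m n :: nat
    and a b c d e f g h :: "nat \<Rightarrow> 'a"
    and Q R S T :: "nat \<Rightarrow> nat \<Rightarrow> 'a"
  assumes "inv_ring_aut s"
    and "Q = (\<lambda>i j. outer (vstar s m f) a i j + outer g c i j - outer e (vstar s n b) i j + outer h d i j)"
    and "R = (\<lambda>i j. outer (vstar s m f) b i j + outer (vstar s m g) d i j + outer e (vstar s n a) i j - outer (vstar s m h) c i j)"
    and "S = (\<lambda>i j. outer (vstar s m g) a i j - outer f c i j - outer h b i j - outer e (vstar s n d) i j)"
    and "T = (\<lambda>i j. outer g b i j - outer f d i j + outer (vstar s m h) a i j + outer e (vstar s n c) i j)"
  shows "psi_mat m n Q * lstar s (psi_mat m n Q) + psi_mat m n R * lstar s (psi_mat m n R)
         + psi_mat m n S * lstar s (psi_mat m n S) + psi_mat m n T * lstar s (psi_mat m n T)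
       = (psi_x n a * lstar s (psi_x n a) + psi_x n b * lstar s (psi_x n b)
          + psi_x n c * lstar s (psi_x n c) + psi_x n d * lstar s (psi_x n d))
       * (psi_y m e * lstar s (psi_y m e) + psi_y m f * lstar s (psi_y m f)
          + psi_y m g * lstar s (psi_y m g) + psi_y m h * lstar s (psi_y m h))"
proof -
  note aut = assms(1)
  note lstar_additive = additive_lstar[OF aut]
  show ?thesis
    unfolding assms(2-5) psi_mat_add psi_mat_diff psi_mat_outer psi_x_vstar[OF aut]
      psi_y_vstar[OF aut] additive.add[OF lstar_additive] additive.diff[OF lstar_additive]
      lstar_mult[OF aut] lstar_involutive[OF aut]
    by (rule four_square_conj_identity)
qed

end
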